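(* Let $a<b$ and let $f:[a,b]\rightarrow\mathbb{R}$ be a differentiable mapping in $(a,b)$ such that $f'\in L^1[a,b]$ and $\gamma\le f'(x)\le \Gamma$ for all $x\in [a,b]$, where $\gamma,\Gamma$ are real constants. Put $S=\frac{f(b)-f(a)}{b-a}$. Then for all $x\in[a,\frac{a+b}{2}]$, \[ \left|\frac{f(x)+f(a+b-x)}{2}-\frac{1}{b-a}\int_{a}^{b}f(t)\,dt\right|\leq \left[\frac{b-a}{4}+\left|x-\frac{3a+b}{4}\right|\right] (S-\gamma) \] and \[ \left|\frac{f(x)+f(a+b-x)}{2}-\frac{1}{b-a}\int_{a}^{b}f(t)\,dt\right|\leq \left[\frac{b-a}{4}+\left|x-\frac{3a+b}{4}\right|\right] (\Gamma-S). \] Moreover, if $\gamma=\inf_{t\in [a,b]}f'(t)$ and $\Gamma=\sup_{t\in [a,b]}f'(t)$, then the constant $\frac14$ (the coefficient of $b-a$ in the bracket) in each of these two inequalities is sharp, in the sense that it cannot be replaced by a smaller constant. *)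

theory Defs
  imports "HOL-Analysis.Analysis"
begin

text \<open>Standing hypotheses of Theorem 2.1: a < b, f continuous on [a,b] (implicit in the paper),
 differentiable in (a,b) with derivative f', f' in L^1[a,b], and gamma <= f' <= Gamma on [a,b].\<close>
definition thm21_hyps :: "real \<Rightarrow> real \<Rightarrow> (real \<Rightarrow> real) \<Rightarrow> (real \<Rightarrow> real) \<Rightarrow> real \<Rightarrow> real \<Rightarrow> bool" where
  "thm21_hyps a b f f' \<gamma> \<Gamma> \<longleftrightarrow>
     a < b \<and> continuous_on {a..b} f \<and>
     (\<forall>x\<in>{a<..<b}. (f has_real_derivative f' x) (at x)) \<and>
     set_integrable lborel {a..b} f' \<and>
     (\<forall>x\<in>{a..b}. \<gamma> \<le> f' x \<and> f' x \<le> \<Gamma>)"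

definition thm21_lhs :: "real \<Rightarrow> real \<Rightarrow> (real \<Rightarrow> real) \<Rightarrow> real \<Rightarrow> real" where
  "thm21_lhs a b f x = \<bar>(f x + f (a + b - x)) / 2 - (1 / (b - a)) * integral {a..b} f\<bar>"

definition slope :: "real \<Rightarrow> real \<Rightarrow> (real \<Rightarrow> real) \<Rightarrow> real" where
  "slope a b f = (f b - f a) / (b - a)"

end

theory Submission
  imports Defs
begin

text \<open>For a continuous nondecreasing \<open>g\<close> the integral over \<open>[a, b]\<close> is squeezed between the lower
  and upper step sums of the partition \<open>a \<le> x \<le> a + b - x \<le> b\<close>; comparing these with the
  trapezoid value \<open>(g x + g (a + b - x)) (b - a) / 2\<close> bounds the deviation by
  \<open>((b - a)/4 + \<bar>x - (3a + b)/4\<bar>) (g b - g a)\<close>. The quantity estimated is invariant under adding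
  linear functions and under \<open>f \<mapsto> -f\<close>, so applying this to \<open>f t - \<gamma> t\<close> and \<open>\<Gamma> t - f t\<close>, which
  are nondecreasing by the bounds on \<open>f'\<close>, gives both inequalities. Sharpness is witnessed at \<open>x = a\<close>
  by \<open>\<plusminus>t\<^sup>n\<close> on \<open>[0, 1]\<close>, where the left-hand side is \<open>1/2 - 1/(n + 1)\<close> and the bracket times the
  factor tends to \<open>1/2\<close>.\<close>

lemma mono_on_if_deriv_nonneg:
  fixes g g' :: "real \<Rightarrow> real"
  assumes cont: "continuous_on {a..b} g"
    and deriv: "\<And>t. t \<in> {a<..<b} \<Longrightarrow> (g has_real_derivative g' t) (at t)"
    and nonneg: "\<And>t. t \<in> {a<..<b} \<Longrightarrow> 0 \<le> g' t"
  shows "mono_on {a..b} g"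
proof (rule mono_onI)
  fix s t assume st: "s \<in> {a..b}" "t \<in> {a..b}" "s \<le> t"
  have "continuous_on {s..t} g"
    using st by (intro continuous_on_subset[OF cont]) auto
  moreover have "\<exists>y. (g has_real_derivative y) (at u) \<and> 0 \<le> y" if "s < u" "u < t" for u
  proof -
    have "u \<in> {a<..<b}"
      using st that by auto
    with deriv nonneg show ?thesis
      by blast
  qed
  ultimately show "g s \<le> g t"
    using DERIV_nonneg_imp_increasing_open[OF \<open>s \<le> t\<close>] by blast
qed

lemma integral_bounds_if_mono_on:
  fixes g :: "real \<Rightarrow> real"
  assumes mono: "mono_on {c..d} g" and int: "g integrable_on {c..d}" and "c \<le> d"
  shows "g c * (d - c) \<le> integral {c..d} g" "integral {c..d} g \<le> g d * (d - c)"
proof -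
  have "g c * (d - c) = integral {c..d} (\<lambda>_. g c)"
    using \<open>c \<le> d\<close> by simp
  also have "\<dots> \<le> integral {c..d} g"
    using \<open>c \<le> d\<close> by (intro integral_le) (auto intro: int mono_onD[OF mono])
  finally show "g c * (d - c) \<le> integral {c..d} g" .
  have "integral {c..d} g \<le> integral {c..d} (\<lambda>_. g d)"
    using \<open>c \<le> d\<close> by (intro integral_le) (auto intro: int mono_onD[OF mono])
  also have "\<dots> = g d * (d - c)"
    using \<open>c \<le> d\<close> by simp
  finally show "integral {c..d} g \<le> g d * (d - c)" .
qed

text \<open>\<open>p \<le> q \<le> r \<le> s\<close> are the values of a nondecreasing function at \<open>a \<le> x \<le> a + b - x \<le> b\<close>,
  \<open>u\<close> and \<open>w\<close> the lengths of the outer and middle pieces, and \<open>I\<close> lies between the lower and upper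
  step sums; the two cases are whether the outer or the middle pieces dominate.\<close>
lemma step_sum_sandwich_bound:
  fixes u w p q r s I :: real
  assumes "u \<ge> 0" "w \<ge> 0" "p \<le> q" "q \<le> r" "r \<le> s"
    and lower: "p*u + q*w + r*u \<le> I" and upper: "I \<le> q*u + r*w + s*u"
  shows "\<bar>(q + r) * (2*u + w) / 2 - I\<bar> \<le> ((2*u + w) / 4 + \<bar>u - (2*u + w) / 4\<bar>) * (s - p)"
proof -
  have mid: "(q + r) * (2*u + w) / 2 = q*u + r*u + q*w/2 + r*w/2"
    by (simp add: algebra_simps)
  have outer: "p*u \<le> q*u" "r*u \<le> s*u"
    using assms by (auto intro: mult_right_mono)
  show ?thesis
  proof (cases "w \<le> 2*u")
    case True
    have "(r - q) * w \<le> (r - q) * (2*u)"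
      using True assms by (intro mult_left_mono) auto
    then have "r*w - q*w \<le> 2*(r*u) - 2*(q*u)"
      by (simp add: algebra_simps)
    moreover have "((2*u + w) / 4 + \<bar>u - (2*u + w) / 4\<bar>) * (s - p) = s*u - p*u"
      using True by (simp add: abs_if algebra_simps)
    ultimately show ?thesis
      unfolding mid abs_le_iff using lower upper outer by linarith
  next
    case False
    have "(q - p) * (2*u) \<le> (q - p) * w" "(s - r) * (2*u) \<le> (s - r) * w"
      using False assms by (auto intro!: mult_left_mono)
    then have "2*(q*u) - 2*(p*u) \<le> q*w - p*w" "2*(s*u) - 2*(r*u) \<le> s*w - r*w"
      by (simp_all add: algebra_simps)
    moreover have "q*w \<le> r*w" "p*w \<le> q*w" "r*w \<le> s*w"
      using assms by (auto intro: mult_right_mono)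
    moreover have "((2*u + w) / 4 + \<bar>u - (2*u + w) / 4\<bar>) * (s - p) = s*w/2 - p*w/2"
      using False by (simp add: abs_if field_simps)
    ultimately show ?thesis
      unfolding mid abs_le_iff using lower upper by linarith
  qed
qed

lemma thm21_lhs_le_if_mono_on:
  fixes g :: "real \<Rightarrow> real"
  assumes "a < b" and cont: "continuous_on {a..b} g" and mono: "mono_on {a..b} g"
    and x: "x \<in> {a..(a + b) / 2}"
  shows "thm21_lhs a b g x \<le> ((b - a) / 4 + \<bar>x - (3 * a + b) / 4\<bar>) * slope a b g"
proof -
  define y where "y = a + b - x"
  have xy: "a \<le> x" "x \<le> y" "y \<le> b" and "b - y = x - a"
    using x by (auto simp: y_def)
  have int: "g integrable_on {c..d}" if "a \<le> c" "d \<le> b" for c d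
    using that by (intro integrable_continuous_real continuous_on_subset[OF cont]) auto
  have bounds: "g c * (d - c) \<le> integral {c..d} g" "integral {c..d} g \<le> g d * (d - c)"
    if "a \<le> c" "c \<le> d" "d \<le> b" for c d
    using that int by (auto intro!: integral_bounds_if_mono_on intro: mono_on_subset[OF mono])
  define I where "I = integral {a..b} g"
  have "I = integral {a..x} g + integral {x..y} g + integral {y..b} g"
    using Henstock_Kurzweil_Integration.integral_combine[OF xy(1) _ int[of a b]]
      Henstock_Kurzweil_Integration.integral_combine[OF xy(2,3) int[of x b]] xy
    unfolding I_def by simp
  then have "g a * (x - a) + g x * (y - x) + g y * (x - a) \<le> I"
    "I \<le> g x * (x - a) + g y * (y - x) + g b * (x - a)"
    using bounds[of a x] bounds[of x y] bounds[of y b] xy \<open>b - y = x - a\<close> by auto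
  moreover have "g a \<le> g x" "g x \<le> g y" "g y \<le> g b"
    using xy by (auto intro!: mono_onD[OF mono])
  ultimately have sandwich: "\<bar>(g x + g y) * (2 * (x - a) + (y - x)) / 2 - I\<bar>
      \<le> ((2 * (x - a) + (y - x)) / 4 + \<bar>(x - a) - (2 * (x - a) + (y - x)) / 4\<bar>) * (g b - g a)"
    using xy by (intro step_sum_sandwich_bound) (auto simp: algebra_simps)
  have lengths: "2 * (x - a) + (y - x) = b - a" "(x - a) - (b - a) / 4 = x - (3 * a + b) / 4"
    by (simp_all add: y_def field_simps)
  have "(g x + g y) / 2 - 1 / (b - a) * I = ((g x + g y) * (b - a) / 2 - I) / (b - a)"
    using \<open>a < b\<close> by (simp add: field_simps)
  then have "thm21_lhs a b g x = \<bar>(g x + g y) * (b - a) / 2 - I\<bar> / (b - a)"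
    using \<open>a < b\<close> unfolding thm21_lhs_def I_def y_def by simp
  also have "\<dots> \<le> ((b - a) / 4 + \<bar>x - (3 * a + b) / 4\<bar>) * (g b - g a) / (b - a)"
    using sandwich[unfolded lengths] \<open>a < b\<close> by (simp add: divide_right_mono)
  finally show ?thesis
    unfolding slope_def by simp
qed

lemma integral_affine_transform:
  fixes f :: "real \<Rightarrow> real"
  assumes "a \<le> b" "f integrable_on {a..b}"
  shows "integral {a..b} (\<lambda>t. c * f t + d * t) = c * integral {a..b} f + d * ((b\<^sup>2 - a\<^sup>2) / 2)"
  using assms
  by (intro integral_unique has_integral_add has_integral_mult_right ident_has_integral
        integrable_integral) simp_all

text \<open>Adding a linear function leaves the left-hand side unchanged: the points \<open>x\<close> and
  \<open>a + b - x\<close> average to the midpoint, as does \<open>t\<close> over \<open>[a, b]\<close>.\<close>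
lemma thm21_lhs_affine_transform:
  assumes "a < b" "f integrable_on {a..b}"
  shows "thm21_lhs a b (\<lambda>t. c * f t + d * t) x = \<bar>c\<bar> * thm21_lhs a b f x"
proof -
  have "(c * f x + d * x + (c * f (a + b - x) + d * (a + b - x))) / 2
        - 1 / (b - a) * (c * integral {a..b} f + d * ((b\<^sup>2 - a\<^sup>2) / 2))
      = c * ((f x + f (a + b - x)) / 2 - 1 / (b - a) * integral {a..b} f)"
    using \<open>a < b\<close> by (simp add: field_simps power2_eq_square)
  then show ?thesis
    using assms unfolding thm21_lhs_def by (simp add: integral_affine_transform abs_mult)
qed

lemma slope_affine_transform:
  "a \<noteq> b \<Longrightarrow> slope a b (\<lambda>t. c * f t + d * t) = c * slope a b f + d"
  by (simp add: slope_def field_simps)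

lemma thm21_bounds:
  assumes hyps: "thm21_hyps a b f f' \<gamma> \<Gamma>" and x: "x \<in> {a..(a + b) / 2}"
  shows "thm21_lhs a b f x \<le> ((b - a) / 4 + \<bar>x - (3 * a + b) / 4\<bar>) * (slope a b f - \<gamma>)"
    and "thm21_lhs a b f x \<le> ((b - a) / 4 + \<bar>x - (3 * a + b) / 4\<bar>) * (\<Gamma> - slope a b f)"
proof -
  have "a < b" and cont: "continuous_on {a..b} f"
    and deriv: "\<And>t. t \<in> {a<..<b} \<Longrightarrow> (f has_real_derivative f' t) (at t)"
    and range: "\<And>t. t \<in> {a..b} \<Longrightarrow> \<gamma> \<le> f' t \<and> f' t \<le> \<Gamma>"
    using hyps unfolding thm21_hyps_def by auto
  have int: "f integrable_on {a..b}"
    using cont integrable_continuous_real by blast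
  have bound: "thm21_lhs a b f x \<le> ((b - a) / 4 + \<bar>x - (3 * a + b) / 4\<bar>) * (c * slope a b f + d)"
    if c: "\<bar>c\<bar> = 1" and nonneg: "\<And>t. t \<in> {a<..<b} \<Longrightarrow> 0 \<le> c * f' t + d" for c d
  proof -
    have "mono_on {a..b} (\<lambda>t. c * f t + d * t)"
      using nonneg
      by (intro mono_on_if_deriv_nonneg[where g' = "\<lambda>t. c * f' t + d"])
         (auto intro!: continuous_intros cont derivative_eq_intros deriv)
    from thm21_lhs_le_if_mono_on[OF \<open>a < b\<close> _ this x] show ?thesis
      using \<open>a < b\<close> c int
      by (simp add: thm21_lhs_affine_transform slope_affine_transform continuous_intros cont)
  qed
  have "0 \<le> 1 * f' t + - \<gamma>" "0 \<le> - 1 * f' t + \<Gamma>" if "t \<in> {a<..<b}" for t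
    using range[of t] that by auto
  then show "thm21_lhs a b f x \<le> ((b - a) / 4 + \<bar>x - (3 * a + b) / 4\<bar>) * (slope a b f - \<gamma>)"
    and "thm21_lhs a b f x \<le> ((b - a) / 4 + \<bar>x - (3 * a + b) / 4\<bar>) * (\<Gamma> - slope a b f)"
    using bound[of 1 "- \<gamma>"] bound[of "- 1" \<Gamma>] by simp_all
qed

lemma thm21_hyps_Inf_Sup_if_continuous_deriv:
  assumes "a < b" and deriv: "\<And>t. (f has_real_derivative f' t) (at t)"
    and cont': "continuous_on {a..b} f'"
  shows "thm21_hyps a b f f' (Inf (f' ` {a..b})) (Sup (f' ` {a..b}))"
proof -
  have "bounded (f' ` {a..b})"
    using compact_continuous_image[OF cont'] by (auto intro: compact_imp_bounded)
  then have "bdd_below (f' ` {a..b})" "bdd_above (f' ` {a..b})"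
    by (auto intro: bounded_imp_bdd_below bounded_imp_bdd_above)
  moreover have "continuous_on {a..b} f"
    using deriv by (intro continuous_at_imp_continuous_on ballI DERIV_isCont) auto
  ultimately show ?thesis
    using assms unfolding thm21_hyps_def
    by (auto intro: cInf_lower cSup_upper borel_integrable_atLeastAtMost')
qed

lemma integral_power_01: "integral {0..1} (\<lambda>t::real. t ^ n) = 1 / (real n + 1)"
proof -
  have "((\<lambda>t. t ^ Suc n / real (Suc n)) has_real_derivative t ^ n) (at t within {0..1})" for t :: real
    using DERIV_cdivide[OF DERIV_pow[of "Suc n"], of "real (Suc n)"] by (simp del: of_nat_Suc)
  then have "((\<lambda>t. t ^ n) has_integral (1 ^ Suc n / Suc n - 0 ^ Suc n / Suc n)) {0..1::real}"
    by (intro fundamental_theorem_of_calculus)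
       (auto simp: has_real_derivative_iff_has_vector_derivative[symmetric] simp del: of_nat_Suc)
  then show ?thesis
    by (simp add: integral_unique)
qed

lemma thm21_lhs_power:
  assumes "n \<ge> 1"
  shows "thm21_lhs 0 1 (\<lambda>t. t ^ n) 0 = 1 / 2 - 1 / (real n + 1)"
proof -
  have "1 / (real n + 1) \<le> 1 / 2"
    using assms by (simp add: field_simps)
  then show ?thesis
    using assms unfolding thm21_lhs_def integral_power_01 by (simp add: power_0_left)
qed

lemma ex_exponent_inverse_less:
  fixes e :: real
  assumes "e > 0"
  shows "\<exists>n :: nat. n \<ge> 2 \<and> 1 / (real n + 1) < e"
proof -
  obtain k where "inverse (real (Suc k)) < e"
    using reals_Archimedean[OF assms] by blast
  moreover have "1 / (real (k + 2) + 1) \<le> inverse (real (Suc k))"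
    by (simp add: field_simps)
  ultimately show ?thesis
    by (intro exI[of _ "k + 2"]) simp
qed

lemma thm21_sharp_gamma:
  assumes "C < 1 / 4"
  shows "\<exists>a b f f' x.
    thm21_hyps a b f f' (Inf (f' ` {a..b})) (Sup (f' ` {a..b})) \<and> x \<in> {a..(a + b) / 2} \<and>
    thm21_lhs a b f x > (C * (b - a) + \<bar>x - (3 * a + b) / 4\<bar>) * (slope a b f - Inf (f' ` {a..b}))"
proof -
  obtain n :: nat where n: "n \<ge> 2" "1 / (real n + 1) < 1 / 4 - C"
    using ex_exponent_inverse_less[of "1 / 4 - C"] assms by auto
  define f' where "f' t = real n * t ^ (n - 1)" for t :: real
  have hyps: "thm21_hyps 0 1 (\<lambda>t. t ^ n) f' (Inf (f' ` {0..1})) (Sup (f' ` {0..1}))"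
  proof (rule thm21_hyps_Inf_Sup_if_continuous_deriv)
    show "((\<lambda>t. t ^ n) has_real_derivative f' t) (at t)" for t
      using DERIV_pow[of n t] by (simp add: f'_def)
    show "continuous_on {0..1} f'"
      unfolding f'_def by (intro continuous_intros)
  qed simp
  have "Inf (f' ` {0..1}) = 0"
    using n by (intro cInf_eq_minimum) (auto simp: f'_def image_iff intro: bexI[of _ 0])
  moreover have "slope 0 1 (\<lambda>t. t ^ n) = 1"
    using n by (simp add: slope_def)
  ultimately show ?thesis
    using hyps n thm21_lhs_power[of n]
    by (intro exI[of _ 0] exI[of _ 1] exI[of _ "\<lambda>t. t ^ n"] exI[of _ f']) auto
qed

lemma thm21_sharp_Gamma:
  assumes "C < 1 / 4"
  shows "\<exists>a b f f' x.
    thm21_hyps a b f f' (Inf (f' ` {a..b})) (Sup (f' ` {a..b})) \<and> x \<in> {a..(a + b) / 2} \<and>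
    thm21_lhs a b f x > (C * (b - a) + \<bar>x - (3 * a + b) / 4\<bar>) * (Sup (f' ` {a..b}) - slope a b f)"
proof -
  obtain n :: nat where n: "n \<ge> 2" "1 / (real n + 1) < 1 / 4 - C"
    using ex_exponent_inverse_less[of "1 / 4 - C"] assms by auto
  define f where "f = (\<lambda>t :: real. - (t ^ n))"
  define f' where "f' t = - (real n * t ^ (n - 1))" for t :: real
  have hyps: "thm21_hyps 0 1 f f' (Inf (f' ` {0..1})) (Sup (f' ` {0..1}))"
  proof (rule thm21_hyps_Inf_Sup_if_continuous_deriv)
    show "(f has_real_derivative f' t) (at t)" for t
      using DERIV_minus[OF DERIV_pow[of n t UNIV]] by (simp add: f_def f'_def)
    show "continuous_on {0..1} f'"
      unfolding f'_def by (intro continuous_intros)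
  qed simp
  have "Sup (f' ` {0..1}) = 0"
    using n by (intro cSup_eq_maximum) (auto simp: f'_def image_iff intro: bexI[of _ 0])
  moreover have "slope 0 1 f = - 1"
    using n by (simp add: slope_def f_def)
  moreover have "thm21_lhs 0 1 f 0 = 1 / 2 - 1 / (real n + 1)"
  proof -
    have "thm21_lhs 0 1 (\<lambda>t. (- 1) * t ^ n + 0 * t) 0 = \<bar>- 1\<bar> * thm21_lhs 0 1 (\<lambda>t. t ^ n) 0"
      by (intro thm21_lhs_affine_transform integrable_continuous_real continuous_intros) simp
    then show ?thesis
      using n thm21_lhs_power[of n] by (simp add: f_def)
  qed
  ultimately show ?thesis
    using hyps n by (intro exI[of _ 0] exI[of _ 1] exI[of _ f] exI[of _ f']) auto
qed

theorem theorem2p1: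
  shows
   "(\<forall>a b f f' \<gamma> \<Gamma>. thm21_hyps a b f f' \<gamma> \<Gamma> \<longrightarrow>
       (\<forall>x\<in>{a..(a + b) / 2}.
          thm21_lhs a b f x \<le> ((b - a) / 4 + \<bar>x - (3 * a + b) / 4\<bar>) * (slope a b f - \<gamma>) \<and>
          thm21_lhs a b f x \<le> ((b - a) / 4 + \<bar>x - (3 * a + b) / 4\<bar>) * (\<Gamma> - slope a b f)))
    \<and>
    (\<forall>C < 1 / 4. \<exists>a b f f' x.
       thm21_hyps a b f f' (Inf (f' ` {a..b})) (Sup (f' ` {a..b})) \<and>
       x \<in> {a..(a + b) / 2} \<and>
       thm21_lhs a b f x > (C * (b - a) + \<bar>x - (3 * a + b) / 4\<bar>) * (slope a b f - Inf (f' ` {a..b})))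
    \<and>
    (\<forall>C < 1 / 4. \<exists>a b f f' x.
       thm21_hyps a b f f' (Inf (f' ` {a..b})) (Sup (f' ` {a..b})) \<and>
       x \<in> {a..(a + b) / 2} \<and>
       thm21_lhs a b f x > (C * (b - a) + \<bar>x - (3 * a + b) / 4\<bar>) * (Sup (f' ` {a..b}) - slope a b f))"
proof (intro conjI allI impI ballI)
  fix a b f f' \<gamma> \<Gamma> x
  assume "thm21_hyps a b f f' \<gamma> \<Gamma>" and "x \<in> {a..(a + b) / 2}"
  then show "thm21_lhs a b f x \<le> ((b - a) / 4 + \<bar>x - (3 * a + b) / 4\<bar>) * (slope a b f - \<gamma>)"
    and "thm21_lhs a b f x \<le> ((b - a) / 4 + \<bar>x - (3 * a + b) / 4\<bar>) * (\<Gamma> - slope a b f)"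
    by (rule thm21_bounds)+
qed (erule thm21_sharp_gamma thm21_sharp_Gamma)+

end
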